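(* Let $N=\ell^2$ for a positive integer $\ell$ and let $x,y\in\{0,1\}^N$. If $\sqrt{N} \ge 3\cdot\textsc{INT}(x,y)$, then the size of the global minimum cut of $G_{x,y}$ equals $2\cdot\textsc{INT}(x,y)$.
   Context: $\textsc{INT}(x,y)=\sum_{i} x_i\wedge y_i$. Index the bits of $x,y\in\{0,1\}^{\ell^2}$ as $x_{i,j},y_{i,j}$ for $1\le i,j\le \ell$. The undirected unweighted graph $G_{x,y}$ has vertex set $A\cup A'\cup B\cup B'$ with $A=\{a_1,\dots,a_\ell\}$, $A'=\{a'_1,\dots,a'_\ell\}$, $B=\{b_1,\dots,b_\ell\}$, $B'=\{b'_1,\dots,b'_\ell\}$ (disjoint), and for each $1\le i,j\le\ell$: if $x_{i,j}=y_{i,j}=1$ then the edges $(a_i,b'_j)$ and $(b_i,a'_j)$ are present; otherwise the edges $(a_i,a'_j)$ and $(b_i,b'_j)$ are present. No other edges exist. The global minimum cut size is $\min_{\varnothing\subset S\subset V}|E(S,V\setminus S)|$. *)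

theory Defs
  imports Complex_Main
begin

text \<open>Vertices of G_{x,y}: a_i, a'_i, b_i, b'_i for 1 \<le> i \<le> l.\<close>
datatype vtx = VA nat | VA' nat | VB nat | VB' nat

text \<open>Bit strings in {0,1}^(l^2) indexed by pairs (i,j), 1 \<le> i,j \<le> l; True = 1.\<close>
type_synonym bits = "nat \<Rightarrow> nat \<Rightarrow> bool"

definition INTf :: "nat \<Rightarrow> bits \<Rightarrow> bits \<Rightarrow> nat" where
  "INTf l x y = card {(i,j). i \<in> {1..l} \<and> j \<in> {1..l} \<and> x i j \<and> y i j}"

definition gverts :: "nat \<Rightarrow> vtx set" where
  "gverts l = VA ` {1..l} \<union> VA' ` {1..l} \<union> VB ` {1..l} \<union> VB' ` {1..l}"

definition gedges :: "nat \<Rightarrow> bits \<Rightarrow> bits \<Rightarrow> vtx set set" where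
  "gedges l x y =
     (\<Union>i\<in>{1..l}. \<Union>j\<in>{1..l}.
        if x i j \<and> y i j then {{VA i, VB' j}, {VB i, VA' j}}
        else {{VA i, VA' j}, {VB i, VB' j}})"

definition cut_size :: "vtx set set \<Rightarrow> vtx set \<Rightarrow> vtx set \<Rightarrow> nat" where
  "cut_size E V S = card {e \<in> E. \<exists>u v. e = {u, v} \<and> u \<in> S \<and> v \<in> V - S}"

definition global_min_cut :: "vtx set \<Rightarrow> vtx set set \<Rightarrow> nat" where
  "global_min_cut V E = Min {cut_size E V S | S. {} \<subset> S \<and> S \<subset> V}"

end

theory Submission
  imports Defs
begin

text \<open>Apart from the intersecting positions, G_{x,y} consists of two complete bipartite
graphs K_{l,l}, one on A \<union> A' and one on B \<union> B'; each pair (i,j) with x_{i,j} = y_{i,j} = 1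
removes one edge from each of them and adds two edges between them. Separating the two halves
therefore cuts exactly 2 INT(x,y) edges. Any other proper cut splits one of the halves, and a cut
splitting K_{l,l} contains at least l of its edges, of which at most INT(x,y) are missing; since
l = \<surd>N \<ge> 3 INT(x,y), this leaves at least 2 INT(x,y) cut edges.\<close>

definition cut_edges :: "vtx set set \<Rightarrow> vtx set \<Rightarrow> vtx set \<Rightarrow> vtx set set" where
  "cut_edges E V S = {e \<in> E. \<exists>u v. e = {u, v} \<and> u \<in> S \<and> v \<in> V - S}"

lemma cut_size_eq_card_cut_edges: "cut_size E V S = card (cut_edges E V S)"
  by (simp add: cut_size_def cut_edges_def)

lemma card_le_cut_size:
  assumes "finite E" and "F \<subseteq> cut_edges E V S"
  shows "card F \<le> cut_size E V S"
  unfolding cut_size_eq_card_cut_edges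
  by (rule card_mono) (use assms in \<open>auto simp: cut_edges_def\<close>)

lemma global_min_cut_eqI:
  assumes "finite V" and "{} \<subset> S\<^sub>0" "S\<^sub>0 \<subset> V" and "cut_size E V S\<^sub>0 = m"
    and "\<And>S. {} \<subset> S \<Longrightarrow> S \<subset> V \<Longrightarrow> m \<le> cut_size E V S"
  shows "global_min_cut V E = m"
proof -
  let ?M = "{cut_size E V S | S. {} \<subset> S \<and> S \<subset> V}"
  have "?M \<subseteq> cut_size E V ` Pow V" by auto
  then have "finite ?M" using \<open>finite V\<close> by (simp add: finite_subset)
  moreover have "m \<in> ?M" using assms(2-4) by blast
  ultimately show ?thesis
    unfolding global_min_cut_def using assms(5) by (intro Min_eqI) auto
qed

lemma card_le_card_separated_pairs:
  fixes p q :: "'i \<Rightarrow> bool"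
  assumes "finite K" and "\<exists>i\<in>K. p i \<or> q i" and "\<exists>i\<in>K. \<not> p i \<or> \<not> q i"
  shows "card K \<le> card {(i, j) \<in> K \<times> K. p i \<noteq> q j}" (is "_ \<le> card ?R")
proof -
  have "\<exists>f. inj_on f K \<and> f ` K \<subseteq> ?R"
  proof (cases "\<exists>i\<^sub>0\<in>K. \<exists>i\<^sub>1\<in>K. p i\<^sub>0 \<and> \<not> p i\<^sub>1")
    case True
    then obtain i\<^sub>0 i\<^sub>1 where "i\<^sub>0 \<in> K" "i\<^sub>1 \<in> K" "p i\<^sub>0" "\<not> p i\<^sub>1" by blast
    then show ?thesis
      by (intro exI[of _ "\<lambda>j. (if q j then i\<^sub>1 else i\<^sub>0, j)"]) (auto simp: inj_on_def)
  next
    case False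
    then obtain j\<^sub>0 where "j\<^sub>0 \<in> K" "\<forall>i\<in>K. p i \<noteq> q j\<^sub>0"
      using assms(2,3) by blast
    then show ?thesis
      by (intro exI[of _ "\<lambda>i. (i, j\<^sub>0)"]) (auto simp: inj_on_def)
  qed
  then obtain f where "inj_on f K" "f ` K \<subseteq> ?R" by blast
  then show ?thesis
    by (rule card_inj_on_le) (use \<open>finite K\<close> in \<open>auto intro: finite_subset[of _ "K \<times> K"]\<close>)
qed

lemma cut_size_ge_split_biclique:
  fixes C D :: "'i \<Rightarrow> vtx"
  assumes "finite E" "finite K" "finite M"
    and inj: "inj_on C K" "inj_on D K"
    and disj: "\<And>i j. i \<in> K \<Longrightarrow> j \<in> K \<Longrightarrow> C i \<noteq> D j"
    and edges: "\<And>i j. i \<in> K \<Longrightarrow> j \<in> K \<Longrightarrow> (i, j) \<notin> M \<Longrightarrow> {C i, D j} \<in> E"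
    and in_V: "C ` K \<union> D ` K \<subseteq> V"
    and meets_S: "(C ` K \<union> D ` K) \<inter> S \<noteq> {}" and not_in_S: "\<not> C ` K \<union> D ` K \<subseteq> S"
  shows "card K - card M \<le> cut_size E V S"
proof -
  define R where "R = {(i, j) \<in> K \<times> K. (C i \<in> S) \<noteq> (D j \<in> S)}"
  define edge where "edge = (\<lambda>(i, j). {C i, D j})"
  have "card K \<le> card R"
    unfolding R_def by (rule card_le_card_separated_pairs) (use \<open>finite K\<close> meets_S not_in_S in auto)
  moreover have "card R - card M \<le> card (R - M)"
    using \<open>finite M\<close> by (rule diff_card_le_card_Diff)
  moreover have "inj_on edge (R - M)"
  proof (rule inj_onI)
    fix a b assume "a \<in> R - M" "b \<in> R - M" "edge a = edge b"
    then obtain i j i' j' where "a = (i, j)" "b = (i', j')" "i \<in> K" "j \<in> K" "i' \<in> K" "j' \<in> K"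
      and "{C i, D j} = {C i', D j'}"
      by (auto simp: edge_def R_def)
    moreover from this have "C i = C i' \<and> D j = D j'"
      using disj by (metis doubleton_eq_iff)
    ultimately show "a = b" using inj by (simp add: inj_on_eq_iff)
  qed
  moreover have "edge ` (R - M) \<subseteq> cut_edges E V S"
  proof
    fix e assume "e \<in> edge ` (R - M)"
    then obtain i j where ij: "i \<in> K" "j \<in> K" "(i, j) \<notin> M" "(C i \<in> S) \<noteq> (D j \<in> S)"
      and e: "e = {C i, D j}"
      by (auto simp: edge_def R_def)
    have "e \<in> E" using edges[OF ij(1-3)] e by simp
    moreover have "e = {D j, C i}" using e by blast
    ultimately show "e \<in> cut_edges E V S"
      using ij e in_V unfolding cut_edges_def by blast
  qed
  then have "card (edge ` (R - M)) \<le> cut_size E V S"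
    using \<open>finite E\<close> by (intro card_le_cut_size)
  ultimately show ?thesis by (simp add: card_image)
qed

definition int_pairs :: "nat \<Rightarrow> bits \<Rightarrow> bits \<Rightarrow> (nat \<times> nat) set" where
  "int_pairs l x y = {(i, j). i \<in> {1..l} \<and> j \<in> {1..l} \<and> x i j \<and> y i j}"

definition side_A :: "nat \<Rightarrow> vtx set" where
  "side_A l = VA ` {1..l} \<union> VA' ` {1..l}"

definition side_B :: "nat \<Rightarrow> vtx set" where
  "side_B l = VB ` {1..l} \<union> VB' ` {1..l}"

definition crossing_edges :: "nat \<Rightarrow> bits \<Rightarrow> bits \<Rightarrow> vtx set set" where
  "crossing_edges l x y =
     (\<lambda>(i, j). {VA i, VB' j}) ` int_pairs l x y \<union> (\<lambda>(i, j). {VB i, VA' j}) ` int_pairs l x y"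

lemma INTf_eq_card_int_pairs: "INTf l x y = card (int_pairs l x y)"
  by (simp add: INTf_def int_pairs_def)

lemma finite_int_pairs: "finite (int_pairs l x y)"
  unfolding int_pairs_def by (rule finite_subset[of _ "{1..l} \<times> {1..l}"]) auto

lemma finite_gverts: "finite (gverts l)"
  by (simp add: gverts_def)

lemma finite_gedges: "finite (gedges l x y)"
  by (simp add: gedges_def)

lemma gverts_eq_sides: "gverts l = side_A l \<union> side_B l"
  by (auto simp: gverts_def side_A_def side_B_def)

lemma sides_disjoint: "side_A l \<inter> side_B l = {}"
  by (auto simp: side_A_def side_B_def)

lemma card_crossing_edges: "card (crossing_edges l x y) = 2 * INTf l x y"
proof -
  let ?I = "int_pairs l x y"
  have "inj_on (\<lambda>(i, j). {VA i, VB' j}) ?I" "inj_on (\<lambda>(i, j). {VB i, VA' j}) ?I"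
    by (auto simp: inj_on_def doubleton_eq_iff)
  moreover have "(\<lambda>(i, j). {VA i, VB' j}) ` ?I \<inter> (\<lambda>(i, j). {VB i, VA' j}) ` ?I = {}"
    by (auto simp: doubleton_eq_iff)
  ultimately show ?thesis
    unfolding crossing_edges_def INTf_eq_card_int_pairs
    by (simp add: card_Un_disjoint card_image finite_int_pairs)
qed

lemma crossing_edges_subset_gedges: "crossing_edges l x y \<subseteq> gedges l x y"
  unfolding crossing_edges_def int_pairs_def gedges_def by fastforce

lemma gedges_cases:
  assumes "e \<in> gedges l x y"
  obtains "e \<in> crossing_edges l x y"
  | i j where "i \<in> {1..l}" "j \<in> {1..l}" "e = {VA i, VA' j} \<or> e = {VB i, VB' j}"
proof -
  from assms obtain i j where ij: "i \<in> {1..l}" "j \<in> {1..l}" and e: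
    "e \<in> (if x i j \<and> y i j then {{VA i, VB' j}, {VB i, VA' j}} else {{VA i, VA' j}, {VB i, VB' j}})"
    unfolding gedges_def by blast
  show thesis
  proof (cases "x i j \<and> y i j")
    case True
    with ij e have "e \<in> crossing_edges l x y"
      unfolding crossing_edges_def int_pairs_def by force
    then show ?thesis by (rule that(1))
  next
    case False
    with ij e show ?thesis using that(2) by auto
  qed
qed

lemma crossing_edges_subset_cut_edges:
  assumes "S = side_A l \<or> S = side_B l"
  shows "crossing_edges l x y \<subseteq> cut_edges (gedges l x y) (gverts l) S"
proof
  fix e assume e: "e \<in> crossing_edges l x y"
  then obtain i j where "i \<in> {1..l}" "j \<in> {1..l}" "e = {VA i, VB' j} \<or> e = {VA' j, VB i}"
    by (auto simp: crossing_edges_def int_pairs_def insert_commute)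
  then obtain a b where ab: "e = {a, b}" "a \<in> side_A l" "b \<in> side_B l"
    unfolding side_A_def side_B_def by blast
  moreover have "e = {b, a}" using ab(1) by (simp add: insert_commute)
  ultimately show "e \<in> cut_edges (gedges l x y) (gverts l) S"
    using assms e crossing_edges_subset_gedges sides_disjoint
    unfolding cut_edges_def gverts_eq_sides by blast
qed

lemma cut_edges_side_A: "cut_edges (gedges l x y) (gverts l) (side_A l) = crossing_edges l x y"
proof
  show "cut_edges (gedges l x y) (gverts l) (side_A l) \<subseteq> crossing_edges l x y"
  proof
    fix e assume "e \<in> cut_edges (gedges l x y) (gverts l) (side_A l)"
    then obtain u v where "e \<in> gedges l x y" "e = {u, v}" "u \<in> side_A l" "v \<notin> side_A l"
      by (auto simp: cut_edges_def)
    then show "e \<in> crossing_edges l x y"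
      by (cases rule: gedges_cases) (auto simp: side_A_def doubleton_eq_iff)
  qed
qed (simp add: crossing_edges_subset_cut_edges)

lemma cut_size_ge_if_splits_side_A:
  assumes "side_A l \<inter> S \<noteq> {}" and "\<not> side_A l \<subseteq> S"
  shows "l - INTf l x y \<le> cut_size (gedges l x y) (gverts l) S"
proof -
  have "card {1..l} - card (int_pairs l x y) \<le> cut_size (gedges l x y) (gverts l) S"
  proof (rule cut_size_ge_split_biclique[where C = VA and D = VA'])
    show "{VA i, VA' j} \<in> gedges l x y"
      if "i \<in> {1..l}" "j \<in> {1..l}" "(i, j) \<notin> int_pairs l x y" for i j
      using that unfolding gedges_def int_pairs_def by fastforce
  qed (use assms in \<open>auto simp: finite_gedges finite_int_pairs inj_on_def side_A_def gverts_def\<close>)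
  then show ?thesis by (simp add: INTf_eq_card_int_pairs)
qed

lemma cut_size_ge_if_splits_side_B:
  assumes "side_B l \<inter> S \<noteq> {}" and "\<not> side_B l \<subseteq> S"
  shows "l - INTf l x y \<le> cut_size (gedges l x y) (gverts l) S"
proof -
  have "card {1..l} - card (int_pairs l x y) \<le> cut_size (gedges l x y) (gverts l) S"
  proof (rule cut_size_ge_split_biclique[where C = VB and D = VB'])
    show "{VB i, VB' j} \<in> gedges l x y"
      if "i \<in> {1..l}" "j \<in> {1..l}" "(i, j) \<notin> int_pairs l x y" for i j
      using that unfolding gedges_def int_pairs_def by fastforce
  qed (use assms in \<open>auto simp: finite_gedges finite_int_pairs inj_on_def side_B_def gverts_def\<close>)
  then show ?thesis by (simp add: INTf_eq_card_int_pairs)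
qed

lemma cut_size_ge_twice_INTf:
  assumes "3 * INTf l x y \<le> l" and "{} \<subset> S" and "S \<subset> gverts l"
  shows "2 * INTf l x y \<le> cut_size (gedges l x y) (gverts l) S"
proof (cases "side_A l \<inter> S \<noteq> {} \<and> \<not> side_A l \<subseteq> S")
  case True
  then show ?thesis using cut_size_ge_if_splits_side_A[of l S x y] assms(1) by linarith
next
  case splits_not_A: False
  show ?thesis
  proof (cases "side_B l \<inter> S \<noteq> {} \<and> \<not> side_B l \<subseteq> S")
    case True
    then show ?thesis using cut_size_ge_if_splits_side_B[of l S x y] assms(1) by linarith
  next
    case False
    with splits_not_A assms(2,3) have "S = side_A l \<or> S = side_B l"
      unfolding gverts_eq_sides using sides_disjoint by blast
    then have "crossing_edges l x y \<subseteq> cut_edges (gedges l x y) (gverts l) S"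
      by (rule crossing_edges_subset_cut_edges)
    then show ?thesis
      using card_le_cut_size[OF finite_gedges] by (metis card_crossing_edges)
  qed
qed

theorem lemma5p5:
  fixes l N :: nat and x y :: bits
  assumes "l > 0" and "N = l^2"
    and "sqrt (real N) \<ge> 3 * real (INTf l x y)"
  shows "global_min_cut (gverts l) (gedges l x y) = 2 * INTf l x y"
proof (rule global_min_cut_eqI[OF finite_gverts])
  show "{} \<subset> side_A l" using assms(1) by (auto simp: side_A_def)
  have "VB 1 \<in> gverts l - side_A l" using assms(1) by (auto simp: gverts_def side_A_def)
  then show "side_A l \<subset> gverts l" by (auto simp: gverts_eq_sides)
  show "cut_size (gedges l x y) (gverts l) (side_A l) = 2 * INTf l x y"
    by (simp add: cut_size_eq_card_cut_edges cut_edges_side_A card_crossing_edges)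
  have "3 * INTf l x y \<le> l" using assms(2,3) by simp
  then show "2 * INTf l x y \<le> cut_size (gedges l x y) (gverts l) S"
    if "{} \<subset> S" "S \<subset> gverts l" for S
    using that by (rule cut_size_ge_twice_INTf)
qed

end
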